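(* Let $n\ge2$ and let $F_n$ have free basis $x_1,\dots,x_n$. There exists a nontrivial cyclically reduced word $\alpha_1\in F_n$ such that the endomorphism $\phi\in\mathrm{End}(F_n)$ defined by $\phi(x_1)=\alpha_1^{-1}x_1\alpha_1$ and $\phi(x_i)=x_i$ for $i\ne1$ is not surjective. (For instance $\alpha_1=x_nx_{n-1}\cdots x_2x_1x_n^{-2}x_{n-1}^{-2}\cdots x_2^{-2}x_1^{-2}$ as chosen in the paper.)
   Context: A word is cyclically reduced if it is reduced and its first letter is not the inverse of its last letter. Together with the preceding result that such conjugating endomorphisms induce surjections on all quotients $F_n/F_n^{(k)}$ of the lower central series ($F_n^{(1)}=F_n$, $F_n^{(k+1)}=[F_n^{(k)},F_n]$), this shows surjectivity on all these nilpotent quotients does not imply surjectivity on $F_n$. *)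

theory Defs
  imports Main
begin

text \<open>The free group F_n on generators x_1,...,x_n, modelled as the set of freely
reduced words.  A letter is a pair (i, b): (i, False) is x_i and (i, True) is x_i^-1.\<close>

type_synonym letter = "nat \<times> bool"
type_synonym word = "letter list"

definition inv_letter :: "letter \<Rightarrow> letter" where
  "inv_letter a = (fst a, \<not> snd a)"

definition inv_word :: "word \<Rightarrow> word" where
  "inv_word w = rev (map inv_letter w)"

fun reduced :: "word \<Rightarrow> bool" where
  "reduced [] = True"
| "reduced [a] = True"
| "reduced (a # b # w) = (b \<noteq> inv_letter a \<and> reduced (b # w))"

fun reduce :: "word \<Rightarrow> word" where
  "reduce [] = []"
| "reduce (a # w) = (case reduce w of
      [] \<Rightarrow> [a]
    | b # w' \<Rightarrow> (if b = inv_letter a then w' else a # b # w'))"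

definition cyclically_reduced :: "word \<Rightarrow> bool" where
  "cyclically_reduced w \<longleftrightarrow> reduced w \<and> (w \<noteq> [] \<longrightarrow> hd w \<noteq> inv_letter (last w))"

definition free_group :: "nat \<Rightarrow> word set" where
  "free_group n = {w. reduced w \<and> (\<forall>a\<in>set w. fst a \<in> {1..n})}"

definition fmult :: "word \<Rightarrow> word \<Rightarrow> word" where
  "fmult u v = reduce (u @ v)"

definition subst_hom :: "(nat \<Rightarrow> word) \<Rightarrow> word \<Rightarrow> word" where
  "subst_hom g w = reduce (concat (map (\<lambda>a. if snd a then inv_word (g (fst a)) else g (fst a)) w))"

definition gen :: "nat \<Rightarrow> word" where
  "gen i = [(i, False)]"

end

theory Submission
  imports Defs "HOL-Combinatorics.Transposition"
begin

text \<open>Send x_1 to the transposition (0 1) and x_2 to (1 2) in the symmetric group on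
  {0, 1, 2}.  For \<alpha> = x_2 x_1 the image of \<phi>(x_1) = \<alpha>^-1 x_1 \<alpha> is the conjugate (1 2), so
  every element of the image of \<phi> acts by id or (1 2), whereas x_1 acts by (0 1).
  Hence x_1 is not in the image of \<phi>.\<close>

text \<open>The sign of a letter is ignored: this is a homomorphism only when every \<rho> i is an
  involution, which is why the lemmas below assume it.\<close>
fun word_action :: "(nat \<Rightarrow> 'a \<Rightarrow> 'a) \<Rightarrow> word \<Rightarrow> 'a \<Rightarrow> 'a" where
  "word_action \<rho> [] = id"
| "word_action \<rho> (a # w) = \<rho> (fst a) \<circ> word_action \<rho> w"

lemma word_action_append: "word_action \<rho> (u @ v) = word_action \<rho> u \<circ> word_action \<rho> v"
  by (induction u) (simp_all add: comp_assoc)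

lemma word_action_rev_comp:
  assumes "\<And>i. \<rho> i \<circ> \<rho> i = id"
  shows "word_action \<rho> (rev w) \<circ> word_action \<rho> w = id"
proof (induction w)
  case (Cons a w)
  have "word_action \<rho> (rev (a # w)) \<circ> word_action \<rho> (a # w)
      = word_action \<rho> (rev w) \<circ> (\<rho> (fst a) \<circ> \<rho> (fst a)) \<circ> word_action \<rho> w"
    by (simp add: word_action_append comp_assoc)
  also have "\<dots> = word_action \<rho> (rev w) \<circ> word_action \<rho> w"
    by (simp add: assms)
  also have "\<dots> = id"
    by (rule Cons.IH)
  finally show ?case .
qed simp

lemma word_action_inv_word_comp:
  assumes "\<And>i. \<rho> i \<circ> \<rho> i = id"
  shows "word_action \<rho> (inv_word w) \<circ> word_action \<rho> w = id"
proof -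
  have "word_action \<rho> (map inv_letter w) = word_action \<rho> w"
    by (induction w) (simp_all add: inv_letter_def)
  then show ?thesis
    using word_action_rev_comp[where \<rho> = \<rho> and w = "map inv_letter w", OF assms]
    by (simp add: inv_word_def rev_map[symmetric])
qed

lemma word_action_reduce:
  assumes "\<And>i. \<rho> i \<circ> \<rho> i = id"
  shows "word_action \<rho> (reduce w) = word_action \<rho> w"
proof (induction w)
  case (Cons a w)
  note IH = Cons.IH
  show ?case
  proof (cases "reduce w")
    case (Cons b w')
    show ?thesis
    proof (cases "b = inv_letter a")
      case True
      then have "fst b = fst a" by (simp add: inv_letter_def)
      then have "word_action \<rho> (a # w) = (\<rho> (fst a) \<circ> \<rho> (fst a)) \<circ> word_action \<rho> w'"
        by (simp flip: IH add: Cons o_def)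
      then show ?thesis using Cons True assms by simp
    qed (simp flip: IH add: Cons)
  qed (simp flip: IH)
qed simp

lemma word_action_subst_hom_mem:
  assumes invol: "\<And>i. \<rho> i \<circ> \<rho> i = id"
    and id_mem: "id \<in> H"
    and comp_mem: "\<And>f h. f \<in> H \<Longrightarrow> h \<in> H \<Longrightarrow> f \<circ> h \<in> H"
    and inv_mem: "\<And>f h. f \<in> H \<Longrightarrow> h \<circ> f = id \<Longrightarrow> h \<in> H"
    and gens_mem: "\<And>i. word_action \<rho> (g i) \<in> H"
  shows "word_action \<rho> (subst_hom g w) \<in> H"
  unfolding subst_hom_def word_action_reduce[OF invol]
proof (induction w)
  case (Cons a w)
  have "word_action \<rho> (if snd a then inv_word (g (fst a)) else g (fst a)) \<in> H"
    using gens_mem inv_mem[OF gens_mem word_action_inv_word_comp[OF invol]] by simp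
  from comp_mem[OF this Cons.IH] show ?case
    by (simp only: list.map concat.simps word_action_append)
qed (simp add: id_mem[unfolded id_def])

lemma left_inverse_of_involution:
  assumes "t \<circ> t = id" and "h \<circ> t = id"
  shows "h = t"
proof -
  have "h = (h \<circ> t) \<circ> t"
    using assms(1) by (simp add: comp_assoc)
  with assms(2) show ?thesis by simp
qed

definition sym3_action :: "nat \<Rightarrow> nat \<Rightarrow> nat" where
  "sym3_action i = (if i = 1 then transpose 0 1 else if i = 2 then transpose 1 2 else id)"

lemma sym3_action_involutive: "sym3_action i \<circ> sym3_action i = id"
  by (simp add: sym3_action_def)

lemma word_action_conjugate_x1:
  "word_action sym3_action
     (fmult (fmult (inv_word [(2, False), (1, False)]) (gen 1)) [(2, False), (1, False)])
   = transpose 1 2"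
  by (auto simp: fmult_def word_action_reduce[OF sym3_action_involutive] word_action_append
      inv_word_def inv_letter_def gen_def sym3_action_def transpose_def fun_eq_iff)

theorem mainTheorem13:
  fixes n :: nat
  assumes "n \<ge> 2"
  shows "\<exists>\<alpha> \<in> free_group n. \<alpha> \<noteq> [] \<and> cyclically_reduced \<alpha> \<and>
           (let \<phi> = subst_hom (\<lambda>i. if i = 1 then fmult (fmult (inv_word \<alpha>) (gen 1)) \<alpha> else gen i)
            in \<not> (\<phi> ` free_group n = free_group n))"
proof -
  define \<alpha> :: word where "\<alpha> = [(2, False), (1, False)]"
  define g where "g = (\<lambda>i. if i = 1 then fmult (fmult (inv_word \<alpha>) (gen 1)) \<alpha> else gen i)"
  let ?H = "{id, transpose (1::nat) 2}"
  have gens_in_H: "word_action sym3_action (g i) \<in> ?H" for i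
    using word_action_conjugate_x1
    by (auto simp: g_def \<alpha>_def gen_def sym3_action_def)
  have image_in_H: "word_action sym3_action (subst_hom g w) \<in> ?H" for w
    by (rule word_action_subst_hom_mem[OF sym3_action_involutive _ _ _ gens_in_H])
      (auto dest: left_inverse_of_involution[OF transpose_comp_involutory])
  have "word_action sym3_action (gen 1) = transpose 0 1"
    by (simp add: gen_def sym3_action_def)
  moreover have "transpose (0::nat) 1 \<notin> ?H"
    by (auto simp: fun_eq_iff transpose_def dest: spec[of _ 0])
  ultimately have "gen 1 \<notin> subst_hom g ` free_group n"
    using image_in_H by (metis imageE)
  moreover have "gen 1 \<in> free_group n"
    using assms by (simp add: free_group_def gen_def)
  moreover have "\<alpha> \<in> free_group n" "\<alpha> \<noteq> []" "cyclically_reduced \<alpha>"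
    using assms by (auto simp: \<alpha>_def free_group_def cyclically_reduced_def inv_letter_def)
  ultimately show ?thesis
    unfolding Let_def g_def by blast
qed

end
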